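(* Let $f,f_0\in\mathcal F$. Let $g$ and $\bar g_0$ be densities on $\mathcal X$, and let $g_0$ be a density on $\mathcal X$ such that $\eta\bar g_0(x)\ge g_0(x)$ for some constant $\eta>0$ and all $x\in\mathcal X$. Then $$d_h^2(f_0,f)\le4\eta\int\Big(\sqrt{f_0(y|x)\bar g_0(x)}-\sqrt{f(y|x)g(x)}\Big)^2\,dy\,dx.$$
   Context: $\mathcal Y\subset\mathbb R^{d_y}$ and $\mathcal X\subset\mathbb R^{d_x}$. $\mathcal F$ is the set of Borel measurable $f:\mathcal Y\times\mathcal X\to[0,\infty)$ with $\int f(y|x)\,dy=1$ for every $x$. For $f_1,f_2\in\mathcal F$, $d_h(f_1,f_2)=\big(\int(\sqrt{f_1(y|x)}-\sqrt{f_2(y|x)})^2g_0(x)\,dy\,dx\big)^{1/2}$. All densities are with respect to Lebesgue measure. *)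

theory Defs
  imports "HOL-Analysis.Analysis"
begin

text \<open>Conditional densities f(y|x) on Y \<times> X, represented as f y x.\<close>
definition cond_dens_class ::
  "('y::euclidean_space) set \<Rightarrow> ('x::euclidean_space) set \<Rightarrow> ('y \<Rightarrow> 'x \<Rightarrow> real) set" where
  "cond_dens_class Y X = {f.
      (\<lambda>(y, x). f y x) \<in> borel_measurable borel \<and>
      (\<forall>y\<in>Y. \<forall>x\<in>X. 0 \<le> f y x) \<and>
      (\<forall>x\<in>X. (\<integral>\<^sup>+ y. ennreal (f y x) * indicator Y y \<partial>lborel) = 1)}"

definition is_density_on :: "('x::euclidean_space) set \<Rightarrow> ('x \<Rightarrow> real) \<Rightarrow> bool" where
  "is_density_on X g \<longleftrightarrow> g \<in> borel_measurable borel \<and> (\<forall>x\<in>X. 0 \<le> g x) \<and>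
      (\<integral>\<^sup>+ x. ennreal (g x) * indicator X x \<partial>lborel) = 1"

definition hellinger_dist ::
  "('y::euclidean_space) set \<Rightarrow> ('x::euclidean_space) set \<Rightarrow> ('x \<Rightarrow> real) \<Rightarrow>
   ('y \<Rightarrow> 'x \<Rightarrow> real) \<Rightarrow> ('y \<Rightarrow> 'x \<Rightarrow> real) \<Rightarrow> real" where
  "hellinger_dist Y X g0 f1 f2 = sqrt (enn2real
     (\<integral>\<^sup>+ x. (\<integral>\<^sup>+ y. ennreal ((sqrt (f1 y x) - sqrt (f2 y x))\<^sup>2 * g0 x) * indicator Y y \<partial>lborel)
          * indicator X x \<partial>lborel))"

end

theory Submission
  imports Defs
begin

text \<open>Fix \<open>x\<close> and write \<open>u = f\<^sub>0(\<cdot>|x)\<close>, \<open>v = f(\<cdot>|x)\<close>, \<open>\<alpha> = g0bar x\<close>, \<open>\<beta> = g x\<close>.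
  Since \<open>g0 x \<le> \<eta> \<alpha>\<close>, it suffices to show
  \<open>\<alpha> \<integral>(\<surd>u - \<surd>v)\<^sup>2 \<le> 4 \<integral>(\<surd>(\<alpha>u) - \<surd>(\<beta>v))\<^sup>2\<close> and integrate over \<open>x\<close>.
  This follows by integrating a pointwise polynomial inequality in \<open>\<surd>\<alpha>, \<surd>\<beta>, \<surd>u, \<surd>v\<close>
  whose correction terms on the two sides have the same integral, because \<open>u\<close> and \<open>v\<close>
  both integrate to one.\<close>

lemma rescaled_diff_square_le:
  fixes a b u v :: real
  assumes "0 \<le> a" "0 \<le> b" "0 \<le> u" "0 \<le> v"
  shows "a\<^sup>2 * (u - v)\<^sup>2 + 2 * b\<^sup>2 * v\<^sup>2 + 2 * a\<^sup>2 * u\<^sup>2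
    \<le> 4 * (a * u - b * v)\<^sup>2 + 2 * b\<^sup>2 * u\<^sup>2 + 2 * a\<^sup>2 * v\<^sup>2"
proof -
  have "0 \<le> (a\<^sup>2 + 2 * b\<^sup>2) * (u - v)\<^sup>2 + 4 * (a - b)\<^sup>2 * u * v"
    using assms by simp
  thus ?thesis by (simp add: power2_eq_square algebra_simps)
qed

lemma nn_integral_mono_cancel:
  assumes [measurable]: "P \<in> borel_measurable M" "Q \<in> borel_measurable M"
    "E1 \<in> borel_measurable M" "E2 \<in> borel_measurable M"
    and le: "\<And>x. x \<in> space M \<Longrightarrow> P x + E1 x \<le> Q x + E2 x"
    and eq: "integral\<^sup>N M E1 = integral\<^sup>N M E2" and fin: "integral\<^sup>N M E1 \<noteq> \<infinity>"
  shows "integral\<^sup>N M P \<le> integral\<^sup>N M Q"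
proof -
  have "integral\<^sup>N M P + integral\<^sup>N M E1 = (\<integral>\<^sup>+ x. P x + E1 x \<partial>M)"
    by (simp add: nn_integral_add)
  also have "\<dots> \<le> (\<integral>\<^sup>+ x. Q x + E2 x \<partial>M)"
    using le by (intro nn_integral_mono) auto
  also have "\<dots> = integral\<^sup>N M Q + integral\<^sup>N M E1"
    by (simp add: nn_integral_add eq)
  finally show ?thesis
    using fin by (simp add: add.commute ennreal_add_left_cancel_le)
qed

lemma hellinger_rescaled_le:
  fixes u v :: "'a \<Rightarrow> real" and \<alpha> \<beta> :: real
  assumes [measurable]: "u \<in> borel_measurable M" "v \<in> borel_measurable M"
    and nonneg: "\<And>y. y \<in> space M \<Longrightarrow> 0 \<le> u y" "\<And>y. y \<in> space M \<Longrightarrow> 0 \<le> v y"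
    and prob: "(\<integral>\<^sup>+ y. ennreal (u y) \<partial>M) = 1" "(\<integral>\<^sup>+ y. ennreal (v y) \<partial>M) = 1"
    and \<alpha>\<beta>: "0 \<le> \<alpha>" "0 \<le> \<beta>"
  shows "(\<integral>\<^sup>+ y. ennreal (\<alpha> * (sqrt (u y) - sqrt (v y))\<^sup>2) \<partial>M)
    \<le> 4 * (\<integral>\<^sup>+ y. ennreal ((sqrt (u y * \<alpha>) - sqrt (v y * \<beta>))\<^sup>2) \<partial>M)"
proof -
  define E1 where "E1 y = ennreal (2 * \<beta>) * ennreal (v y) + ennreal (2 * \<alpha>) * ennreal (u y)" for y
  define E2 where "E2 y = ennreal (2 * \<beta>) * ennreal (u y) + ennreal (2 * \<alpha>) * ennreal (v y)" for y
  have "(\<integral>\<^sup>+ y. ennreal (\<alpha> * (sqrt (u y) - sqrt (v y))\<^sup>2) \<partial>M)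
      \<le> (\<integral>\<^sup>+ y. ennreal (4 * (sqrt (u y * \<alpha>) - sqrt (v y * \<beta>))\<^sup>2) \<partial>M)"
  proof (rule nn_integral_mono_cancel)
    show "integral\<^sup>N M E1 = integral\<^sup>N M E2" "integral\<^sup>N M E1 \<noteq> \<infinity>"
      unfolding E1_def E2_def by (simp_all add: nn_integral_add nn_integral_cmult prob add.commute)
    fix y assume "y \<in> space M"
    with nonneg have uv: "0 \<le> u y" "0 \<le> v y" by auto
    have "\<alpha> * (sqrt (u y) - sqrt (v y))\<^sup>2 + (2 * \<beta> * v y + 2 * \<alpha> * u y)
       \<le> 4 * (sqrt (u y * \<alpha>) - sqrt (v y * \<beta>))\<^sup>2 + (2 * \<beta> * u y + 2 * \<alpha> * v y)"
      using rescaled_diff_square_le[of "sqrt \<alpha>" "sqrt \<beta>" "sqrt (u y)" "sqrt (v y)"] uv \<alpha>\<beta>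
      by (simp add: real_sqrt_mult mult.commute mult.left_commute add.assoc)
    then show "ennreal (\<alpha> * (sqrt (u y) - sqrt (v y))\<^sup>2) + E1 y
        \<le> ennreal (4 * (sqrt (u y * \<alpha>) - sqrt (v y * \<beta>))\<^sup>2) + E2 y"
      unfolding E1_def E2_def using uv \<alpha>\<beta>
      by (simp add: ennreal_mult'[symmetric] ennreal_plus[symmetric] del: ennreal_plus)
  qed (simp_all add: E1_def[abs_def] E2_def[abs_def])
  then show ?thesis
    by (simp add: ennreal_mult nn_integral_cmult)
qed

lemma hellinger_weighted_le:
  fixes u v :: "'a \<Rightarrow> real" and w \<alpha> \<beta> \<eta> :: real
  assumes "u \<in> borel_measurable M" "v \<in> borel_measurable M"
    and "\<And>y. y \<in> space M \<Longrightarrow> 0 \<le> u y" "\<And>y. y \<in> space M \<Longrightarrow> 0 \<le> v y"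
    and "(\<integral>\<^sup>+ y. ennreal (u y) \<partial>M) = 1" "(\<integral>\<^sup>+ y. ennreal (v y) \<partial>M) = 1"
    and "0 \<le> \<alpha>" "0 \<le> \<beta>" "0 \<le> \<eta>" and w_le: "w \<le> \<eta> * \<alpha>"
  shows "(\<integral>\<^sup>+ y. ennreal ((sqrt (u y) - sqrt (v y))\<^sup>2 * w) \<partial>M)
    \<le> ennreal (4 * \<eta>) * (\<integral>\<^sup>+ y. ennreal ((sqrt (u y * \<alpha>) - sqrt (v y * \<beta>))\<^sup>2) \<partial>M)"
proof -
  have "(\<integral>\<^sup>+ y. ennreal ((sqrt (u y) - sqrt (v y))\<^sup>2 * w) \<partial>M)
      \<le> (\<integral>\<^sup>+ y. ennreal \<eta> * ennreal (\<alpha> * (sqrt (u y) - sqrt (v y))\<^sup>2) \<partial>M)"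
    using mult_left_mono[OF w_le, of "(sqrt (u _) - sqrt (v _))\<^sup>2"] \<open>0 \<le> \<alpha>\<close> \<open>0 \<le> \<eta>\<close>
    by (intro nn_integral_mono) (auto simp: ennreal_mult'[symmetric] mult_ac intro!: ennreal_leI)
  also have "\<dots> = ennreal \<eta> * (\<integral>\<^sup>+ y. ennreal (\<alpha> * (sqrt (u y) - sqrt (v y))\<^sup>2) \<partial>M)"
    using assms(1,2) by (simp add: nn_integral_cmult)
  also have "\<dots> \<le> ennreal \<eta> * (4 * (\<integral>\<^sup>+ y. ennreal ((sqrt (u y * \<alpha>) - sqrt (v y * \<beta>))\<^sup>2) \<partial>M))"
    by (intro mult_left_mono hellinger_rescaled_le) (use assms in auto)
  finally show ?thesis
    using \<open>0 \<le> \<eta>\<close> by (simp add: ennreal_mult mult.assoc mult.left_commute)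
qed

lemma cond_dens_class_measurable:
  "f \<in> cond_dens_class Y X \<Longrightarrow> (\<lambda>(y, x). f y x) \<in> borel_measurable (lborel \<Otimes>\<^sub>M lborel)"
  by (simp add: cond_dens_class_def lborel_prod)

lemma cond_dens_section:
  assumes "f \<in> cond_dens_class Y X" and "Y \<in> sets lborel" and "x \<in> X"
  shows "(\<lambda>y. f y x) \<in> borel_measurable (restrict_space lborel Y)"
    and "\<And>y. y \<in> space (restrict_space lborel Y) \<Longrightarrow> 0 \<le> f y x"
    and "(\<integral>\<^sup>+ y. ennreal (f y x) \<partial>restrict_space lborel Y) = 1"
proof -
  have [measurable]: "(\<lambda>(y, x). f y x) \<in> borel_measurable (lborel \<Otimes>\<^sub>M lborel)"
    using assms(1) by (rule cond_dens_class_measurable)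
  show "(\<lambda>y. f y x) \<in> borel_measurable (restrict_space lborel Y)"
    by (intro measurable_restrict_space1) measurable
  show "\<And>y. y \<in> space (restrict_space lborel Y) \<Longrightarrow> 0 \<le> f y x"
    "(\<integral>\<^sup>+ y. ennreal (f y x) \<partial>restrict_space lborel Y) = 1"
    using assms by (auto simp: cond_dens_class_def nn_integral_restrict_space)
qed

lemma cond_dens_hellinger_section_le:
  assumes "f \<in> cond_dens_class Y X" "f0 \<in> cond_dens_class Y X" "Y \<in> sets lborel" "x \<in> X"
    and "0 \<le> \<alpha>" "0 \<le> \<beta>" "0 \<le> \<eta>" "w \<le> \<eta> * \<alpha>"
  shows "(\<integral>\<^sup>+ y. ennreal ((sqrt (f0 y x) - sqrt (f y x))\<^sup>2 * w) * indicator Y y \<partial>lborel)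
    \<le> ennreal (4 * \<eta>) *
      (\<integral>\<^sup>+ y. ennreal ((sqrt (f0 y x * \<alpha>) - sqrt (f y x * \<beta>))\<^sup>2) * indicator Y y \<partial>lborel)"
  using hellinger_weighted_le[OF cond_dens_section(1)[OF assms(2,3,4)] cond_dens_section(1)[OF assms(1,3,4)]
      cond_dens_section(2)[OF assms(2,3,4)] cond_dens_section(2)[OF assms(1,3,4)]
      cond_dens_section(3)[OF assms(2,3,4)] cond_dens_section(3)[OF assms(1,3,4)] assms(5-8)]
  using assms(3) by (simp add: nn_integral_restrict_space)

theorem corollary3:
  fixes Y :: "('y::euclidean_space) set" and X :: "('x::euclidean_space) set"
    and f f0 :: "'y \<Rightarrow> 'x \<Rightarrow> real" and g g0 g0bar :: "'x \<Rightarrow> real" and \<eta> :: real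
  assumes "Y \<in> sets lborel" and "X \<in> sets lborel"
    and "f \<in> cond_dens_class Y X" and "f0 \<in> cond_dens_class Y X"
    and "is_density_on X g" and "is_density_on X g0bar" and "is_density_on X g0"
    and "\<eta> > 0" and "\<forall>x\<in>X. \<eta> * g0bar x \<ge> g0 x"
  shows "ennreal ((hellinger_dist Y X g0 f0 f)\<^sup>2) \<le>
    ennreal (4 * \<eta>) *
    (\<integral>\<^sup>+ x. (\<integral>\<^sup>+ y. ennreal ((sqrt (f0 y x * g0bar x) - sqrt (f y x * g x))\<^sup>2)
                 * indicator Y y \<partial>lborel) * indicator X x \<partial>lborel)"
proof -
  define T where "T x = (\<integral>\<^sup>+ y. ennreal ((sqrt (f0 y x * g0bar x) - sqrt (f y x * g x))\<^sup>2)
    * indicator Y y \<partial>lborel)" for x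
  define I where "I = (\<integral>\<^sup>+ x. (\<integral>\<^sup>+ y. ennreal ((sqrt (f0 y x) - sqrt (f y x))\<^sup>2 * g0 x)
    * indicator Y y \<partial>lborel) * indicator X x \<partial>lborel)"
  have [measurable]: "(\<lambda>(y, x). f y x) \<in> borel_measurable (lborel \<Otimes>\<^sub>M lborel)"
    "(\<lambda>(y, x). f0 y x) \<in> borel_measurable (lborel \<Otimes>\<^sub>M lborel)"
    using assms(3,4) by (auto intro: cond_dens_class_measurable)
  have [measurable]: "g \<in> borel_measurable borel" "g0bar \<in> borel_measurable borel"
    "Y \<in> sets borel" "X \<in> sets borel"
    using assms(1,2,5,6) by (auto simp: is_density_on_def)
  have "T \<in> borel_measurable lborel"
    unfolding T_def by measurable
  then have [measurable]: "T \<in> borel_measurable borel"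
    by simp
  have "ennreal ((hellinger_dist Y X g0 f0 f)\<^sup>2) \<le> I"
    unfolding hellinger_dist_def I_def by (simp add: ennreal_enn2real_if)
  also have "I \<le> (\<integral>\<^sup>+ x. ennreal (4 * \<eta>) * (T x * indicator X x) \<partial>lborel)"
  proof (unfold I_def, intro nn_integral_mono)
    fix x
    show "(\<integral>\<^sup>+ y. ennreal ((sqrt (f0 y x) - sqrt (f y x))\<^sup>2 * g0 x) * indicator Y y \<partial>lborel)
        * indicator X x \<le> ennreal (4 * \<eta>) * (T x * indicator X x)"
    proof (cases "x \<in> X")
      case True
      with assms have "0 \<le> g0bar x" "0 \<le> g x" "g0 x \<le> \<eta> * g0bar x"
        by (auto simp: is_density_on_def)
      with True show ?thesis
        unfolding T_def using assms(1,3,4,8)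
        by (simp add: cond_dens_hellinger_section_le)
    qed simp
  qed
  also have "\<dots> = ennreal (4 * \<eta>) * (\<integral>\<^sup>+ x. T x * indicator X x \<partial>lborel)"
    by (intro nn_integral_cmult) measurable
  finally show ?thesis
    unfolding T_def .
qed

end
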